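(* Let $G$ be a graph with adjacency matrix $A$, signless Laplacian $Q$, and maximum degree $\Delta$. (i) If $0\le\alpha\le1/2$, then $\rho(A_\alpha(G))\ge(1-\alpha)\rho(Q)+(2\alpha-1)\Delta$. If $G$ is connected and irregular, equality holds if and only if $\alpha=1/2$. (ii) If $1/2\le\alpha\le1$, then $\rho(A_\alpha(G))\ge\alpha\rho(Q)+(1-2\alpha)\rho(A)$. If $G$ is connected and irregular, equality holds if and only if $\alpha=1/2$.
   Context: For a graph $G$, $A(G)$ is the adjacency matrix, $D(G)$ the diagonal degree matrix, $Q(G)=D(G)+A(G)$ the signless Laplacian, and $A_\alpha(G)=\alpha D(G)+(1-\alpha)A(G)$ for $\alpha\in[0,1]$. $\rho(M)$ is the largest eigenvalue of a real symmetric matrix $M$. A graph is irregular if not all its vertices have the same degree. *)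

theory Defs
  imports "HOL-Analysis.Analysis"
begin

definition simple_graph :: "('n::finite \<Rightarrow> 'n \<Rightarrow> bool) \<Rightarrow> bool" where
  "simple_graph E \<longleftrightarrow> (\<forall>i j. E i j \<longrightarrow> E j i) \<and> (\<forall>i. \<not> E i i)"

definition degree :: "('n::finite \<Rightarrow> 'n \<Rightarrow> bool) \<Rightarrow> 'n \<Rightarrow> nat" where
  "degree E i = card {j. E i j}"

definition max_degree :: "('n::finite \<Rightarrow> 'n \<Rightarrow> bool) \<Rightarrow> nat" where
  "max_degree E = Max (range (degree E))"

definition connected_graph :: "('n::finite \<Rightarrow> 'n \<Rightarrow> bool) \<Rightarrow> bool" where
  "connected_graph E \<longleftrightarrow> (\<forall>i j. E\<^sup>*\<^sup>* i j)"

definition irregular :: "('n::finite \<Rightarrow> 'n \<Rightarrow> bool) \<Rightarrow> bool" where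
  "irregular E \<longleftrightarrow> (\<exists>i j. degree E i \<noteq> degree E j)"

definition adj_matrix :: "('n::finite \<Rightarrow> 'n \<Rightarrow> bool) \<Rightarrow> real^'n^'n" where
  "adj_matrix E = (\<chi> i j. if E i j then 1 else 0)"

definition deg_matrix :: "('n::finite \<Rightarrow> 'n \<Rightarrow> bool) \<Rightarrow> real^'n^'n" where
  "deg_matrix E = (\<chi> i j. if i = j then real (degree E i) else 0)"

definition signless_laplacian :: "('n::finite \<Rightarrow> 'n \<Rightarrow> bool) \<Rightarrow> real^'n^'n" where
  "signless_laplacian E = deg_matrix E + adj_matrix E"

definition A_alpha :: "real \<Rightarrow> ('n::finite \<Rightarrow> 'n \<Rightarrow> bool) \<Rightarrow> real^'n^'n" where
  "A_alpha \<alpha> E = \<alpha> *\<^sub>R deg_matrix E + (1 - \<alpha>) *\<^sub>R adj_matrix E"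

definition rho :: "real^'n^'n \<Rightarrow> real" where
  "rho M = Max {t. \<exists>v. v \<noteq> 0 \<and> M *v v = t *\<^sub>R v}"

end

theory Submission
  imports Defs
begin

text \<open>Let y be a unit eigenvector of Q for \<rho>(Q) with nonnegative entries; it exists because Q
has nonnegative entries, so the entrywise absolute value of a maximizer of the Rayleigh quotient
is again a maximizer. Writing a = y'Dy and b = y'Ay, we have a + b = \<rho>(Q) and
\<rho>(A_alpha) \<ge> y'(A_alpha)y = \<alpha> a + (1 - \<alpha>) b, so the two inequalities follow from a \<le> \<Delta>
and b \<le> \<rho>(A) respectively. If \<alpha> \<noteq> 1/2, equality forces a = \<Delta> (resp. b = \<rho>(A)), which makes
y an eigenvector of D (resp. of A) and hence, via Q = D + A, of both. For a connected graph such a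
y is positive, so all degrees coincide, contradicting irregularity. At \<alpha> = 1/2 we have
A_alpha = Q/2, and both bounds are equalities.\<close>

lemma symmetric_matrix_inner_commute:
  fixes M :: "real^'n^'n"
  assumes "transpose M = M"
  shows "x \<bullet> (M *v y) = (M *v x) \<bullet> y"
  by (metis assms dot_lmul_matrix vector_transpose_matrix)

lemma eigenvector_of_quadratic_form_maximizer:
  fixes M :: "real^'n^'n"
  assumes sym: "transpose M = M"
    and le: "\<And>y. y \<bullet> (M *v y) \<le> l * (y \<bullet> y)"
    and eq: "x \<bullet> (M *v x) = l * (x \<bullet> x)"
  shows "M *v x = l *\<^sub>R x"
proof -
  define w where "w = M *v x - l *\<^sub>R x"
  define c where "c = l * (w \<bullet> w) - w \<bullet> (M *v w)"
  have "c \<ge> 0" using le[of w] by (simp add: c_def)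
  \<comment> \<open>l |y|^2 - y'My is a nonnegative form vanishing at x; along x + t w its linear term is -2 t |w|^2\<close>
  have along_w: "t * (w \<bullet> w) \<le> t\<^sup>2 / 2 * c" for t
  proof -
    have "(x + t *\<^sub>R w) \<bullet> (M *v (x + t *\<^sub>R w)) \<le> l * ((x + t *\<^sub>R w) \<bullet> (x + t *\<^sub>R w))"
      by (rule le)
    moreover have "w \<bullet> (M *v x) = (M *v w) \<bullet> x"
      using symmetric_matrix_inner_commute[OF sym] by (metis inner_commute)
    moreover have "w \<bullet> (M *v x) - l * (w \<bullet> x) = w \<bullet> w"
      by (simp add: w_def inner_diff_right inner_diff_left algebra_simps)
    ultimately show ?thesis using eq
      by (simp add: c_def inner_add_left inner_add_right algebra_simps power2_eq_square inner_commute)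
  qed
  have "w \<bullet> w \<le> 0"
  proof (rule field_le_epsilon)
    fix e :: real assume "e > 0"
    define t where "t = 2 * e / (c + 1)"
    have "t > 0" using \<open>e > 0\<close> \<open>c \<ge> 0\<close> by (simp add: t_def)
    have "t * (w \<bullet> w) \<le> t * (t / 2 * c)" using along_w[of t] by (simp add: power2_eq_square)
    hence "w \<bullet> w \<le> t / 2 * c" using \<open>t > 0\<close> by simp
    also have "\<dots> = e * (c / (c + 1))" using \<open>c \<ge> 0\<close> by (simp add: t_def field_simps)
    also have "\<dots> \<le> e" using \<open>e > 0\<close> \<open>c \<ge> 0\<close> by (intro mult_left_le) auto
    finally show "w \<bullet> w \<le> 0 + e" by simp
  qed
  hence "w = 0" by (metis inner_eq_zero_iff inner_ge_zero order_antisym)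
  thus ?thesis by (simp add: w_def)
qed

definition real_eigenvalues :: "real^'n^'n \<Rightarrow> real set" where
  "real_eigenvalues M = {t. \<exists>v. v \<noteq> 0 \<and> M *v v = t *\<^sub>R v}"

lemma rho_eq_Max_real_eigenvalues: "rho M = Max (real_eigenvalues M)"
  by (simp add: rho_def real_eigenvalues_def)

lemma finite_real_eigenvalues:
  fixes M :: "real^'n^'n"
  assumes sym: "transpose M = M"
  shows "finite (real_eigenvalues M)"
proof -
  define S where "S = real_eigenvalues M"
  define v where "v t = (SOME v. v \<noteq> 0 \<and> M *v v = t *\<^sub>R v)" for t
  have v: "v t \<noteq> 0" "M *v v t = t *\<^sub>R v t" if "t \<in> S" for t
    using someI_ex[of "\<lambda>v. v \<noteq> 0 \<and> M *v v = t *\<^sub>R v"] that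
    by (auto simp: S_def real_eigenvalues_def v_def)
  have "inj_on v S"
    by (rule inj_onI) (metis v scaleR_cancel_right)
  moreover have "pairwise orthogonal (v ` S)"
  proof (clarsimp simp: pairwise_def)
    fix t s assume ts: "t \<in> S" "s \<in> S" "v t \<noteq> v s"
    have "t * (v t \<bullet> v s) = v t \<bullet> (M *v v s)"
      using symmetric_matrix_inner_commute[OF sym, of "v t" "v s"] v[OF ts(1)] by simp
    also have "\<dots> = s * (v t \<bullet> v s)" using v[OF ts(2)] by simp
    finally show "orthogonal (v t) (v s)"
      using ts by (auto simp: orthogonal_def)
  qed
  moreover have "0 \<notin> v ` S" using v by auto
  ultimately have "finite (v ` S)"
    using pairwise_orthogonal_independent independent_bound by blast
  with \<open>inj_on v S\<close> show ?thesis by (simp add: S_def finite_image_iff)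
qed

lemma rho_rayleigh:
  fixes M :: "real^'n^'n"
  assumes sym: "transpose M = M"
  shows "y \<bullet> (M *v y) \<le> rho M * (y \<bullet> y)"
    and "\<exists>u. u \<bullet> u = 1 \<and> u \<bullet> (M *v u) = rho M"
proof -
  define f where "f y = y \<bullet> (M *v y)" for y :: "real^'n"
  have "continuous_on (sphere 0 1) f" unfolding f_def
    by (intro continuous_on_inner continuous_on_id matrix_vector_mult_linear_continuous_on)
  moreover have "sphere (0::real^'n) 1 \<noteq> {}" by simp
  ultimately obtain u where u: "u \<in> sphere 0 1" "\<And>y. y \<in> sphere 0 1 \<Longrightarrow> f y \<le> f u"
    using continuous_attains_sup[OF compact_sphere] by blast
  have uu: "u \<bullet> u = 1" using u(1) by (simp add: dot_square_norm)
  \<comment> \<open>the form is homogeneous of degree 2, so its maximum on the sphere bounds it everywhere\<close>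
  have le: "f y \<le> f u * (y \<bullet> y)" for y
  proof (cases "y = 0")
    case False
    have "f ((1 / norm y) *\<^sub>R y) \<le> f u" using u(2) False by simp
    moreover have "f ((1 / norm y) *\<^sub>R y) = f y / (norm y)\<^sup>2"
      by (simp add: f_def matrix_vector_mult_scaleR power2_eq_square)
    ultimately show ?thesis using False by (simp add: divide_le_eq dot_square_norm)
  qed (simp add: f_def)
  have Mu: "M *v u = f u *\<^sub>R u"
    using eigenvector_of_quadratic_form_maximizer[OF sym le[unfolded f_def]] uu
    by (simp add: f_def)
  have "rho M = f u"
    unfolding rho_eq_Max_real_eigenvalues
  proof (rule Max_eqI)
    show "finite (real_eigenvalues M)" by (rule finite_real_eigenvalues[OF sym])
    show "f u \<in> real_eigenvalues M"
      using Mu uu by (auto simp: real_eigenvalues_def intro!: exI[of _ u])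
    fix t assume "t \<in> real_eigenvalues M"
    then obtain v where v: "v \<noteq> 0" "M *v v = t *\<^sub>R v" by (auto simp: real_eigenvalues_def)
    have "t * (v \<bullet> v) \<le> f u * (v \<bullet> v)" using le[of v] v by (simp add: f_def)
    thus "t \<le> f u" using v by simp
  qed
  thus "y \<bullet> (M *v y) \<le> rho M * (y \<bullet> y)" "\<exists>u. u \<bullet> u = 1 \<and> u \<bullet> (M *v u) = rho M"
    using le[of y] uu by (auto simp: f_def)
qed

lemma rayleigh_maximizer_eigenvector:
  fixes M :: "real^'n^'n"
  assumes "transpose M = M" and "x \<bullet> (M *v x) = rho M * (x \<bullet> x)"
  shows "M *v x = rho M *\<^sub>R x"
  using eigenvector_of_quadratic_form_maximizer rho_rayleigh(1) assms by blast

lemma rho_scaleR: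
  fixes M :: "real^'n^'n"
  assumes sym: "transpose M = M" and "c \<ge> 0"
  shows "rho (c *\<^sub>R M) = c * rho M"
proof (rule antisym)
  have sym': "transpose (c *\<^sub>R M) = c *\<^sub>R M" using sym by (simp add: transpose_scalar)
  obtain u where u: "u \<bullet> u = 1" "u \<bullet> (c *\<^sub>R M *v u) = rho (c *\<^sub>R M)"
    using rho_rayleigh(2)[OF sym'] by blast
  show "rho (c *\<^sub>R M) \<le> c * rho M"
    using u mult_left_mono[OF rho_rayleigh(1)[OF sym, of u] \<open>c \<ge> 0\<close>]
    by (simp add: scaleR_matrix_vector_assoc[symmetric])
  obtain v where v: "v \<bullet> v = 1" "v \<bullet> (M *v v) = rho M"
    using rho_rayleigh(2)[OF sym] by blast
  show "c * rho M \<le> rho (c *\<^sub>R M)"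
    using v rho_rayleigh(1)[OF sym', of v]
    by (simp add: scaleR_matrix_vector_assoc[symmetric])
qed

lemma nonneg_rho_eigenvector:
  fixes M :: "real^'n^'n"
  assumes sym: "transpose M = M" and nonneg: "\<And>i j. M $ i $ j \<ge> 0"
  obtains y where "y \<ge> 0" "y \<bullet> y = 1" "M *v y = rho M *\<^sub>R y"
proof -
  obtain u where u: "u \<bullet> u = 1" "u \<bullet> (M *v u) = rho M"
    using rho_rayleigh(2)[OF sym] by blast
  have abs_inner_self: "\<bar>u\<bar> \<bullet> \<bar>u\<bar> = u \<bullet> u"
    by (simp add: abs_vec_def inner_vec_def)
  have "u \<bullet> (M *v u) = (\<Sum>i\<in>UNIV. \<Sum>j\<in>UNIV. u$i * M$i$j * u$j)"
    by (simp add: inner_vec_def matrix_vector_mult_def sum_distrib_left mult.assoc)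
  also have "\<dots> \<le> (\<Sum>i\<in>UNIV. \<Sum>j\<in>UNIV. \<bar>u$i\<bar> * M$i$j * \<bar>u$j\<bar>)"
    by (intro sum_mono) (metis abs_ge_self abs_mult abs_of_nonneg nonneg)
  also have "\<dots> = \<bar>u\<bar> \<bullet> (M *v \<bar>u\<bar>)"
    by (simp add: abs_vec_def inner_vec_def matrix_vector_mult_def sum_distrib_left mult.assoc)
  finally have "rho M * (\<bar>u\<bar> \<bullet> \<bar>u\<bar>) \<le> \<bar>u\<bar> \<bullet> (M *v \<bar>u\<bar>)"
    using u abs_inner_self by simp
  hence "\<bar>u\<bar> \<bullet> (M *v \<bar>u\<bar>) = rho M * (\<bar>u\<bar> \<bullet> \<bar>u\<bar>)"
    using rho_rayleigh(1)[OF sym, of "\<bar>u\<bar>"] by linarith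
  with sym have "M *v \<bar>u\<bar> = rho M *\<^sub>R \<bar>u\<bar>"
    by (rule rayleigh_maximizer_eigenvector)
  moreover have "\<bar>u\<bar> \<ge> 0" by (simp add: less_eq_vec_def abs_vec_def)
  ultimately show ?thesis using u abs_inner_self by (intro that) auto
qed

lemma transpose_add: "transpose (M + N) = transpose M + transpose N"
  by (simp add: transpose_def vec_eq_iff)

lemma transpose_adj_matrix: "simple_graph E \<Longrightarrow> transpose (adj_matrix E) = adj_matrix E"
  by (auto simp: transpose_def adj_matrix_def simple_graph_def vec_eq_iff)

lemma transpose_deg_matrix: "transpose (deg_matrix E) = deg_matrix E"
  by (auto simp: transpose_def deg_matrix_def vec_eq_iff)

lemma transpose_signless_laplacian:
  "simple_graph E \<Longrightarrow> transpose (signless_laplacian E) = signless_laplacian E"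
  by (simp add: signless_laplacian_def transpose_add transpose_adj_matrix transpose_deg_matrix)

lemma transpose_A_alpha: "simple_graph E \<Longrightarrow> transpose (A_alpha \<alpha> E) = A_alpha \<alpha> E"
  by (simp add: A_alpha_def transpose_add transpose_scalar transpose_adj_matrix transpose_deg_matrix)

lemma signless_laplacian_nonneg: "signless_laplacian E $ i $ j \<ge> 0"
  by (simp add: signless_laplacian_def deg_matrix_def adj_matrix_def)

lemma deg_matrix_mult: "deg_matrix E *v y = (\<chi> i. real (degree E i) * y $ i)"
proof -
  have "(\<Sum>j\<in>UNIV. (if i = j then real (degree E i) else 0) * y $ j) = real (degree E i) * y $ i"
    for i by (simp add: if_distrib[of "\<lambda>t. t * _"] cong: if_cong)
  thus ?thesis by (simp add: deg_matrix_def matrix_vector_mult_def vec_eq_iff)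
qed

lemma degree_le_max_degree: "degree E i \<le> max_degree E"
  unfolding max_degree_def by (rule Max_ge) auto

lemma deg_quadratic_form: "y \<bullet> (deg_matrix E *v y) = (\<Sum>i\<in>UNIV. real (degree E i) * (y $ i)\<^sup>2)"
  unfolding deg_matrix_mult by (simp add: inner_vec_def power2_eq_square mult_ac)

lemma deg_quadratic_form_le_max_degree:
  "y \<bullet> (deg_matrix E *v y) \<le> real (max_degree E) * (y \<bullet> y)"
proof -
  have "y \<bullet> (deg_matrix E *v y) \<le> (\<Sum>i\<in>UNIV. real (max_degree E) * (y $ i)\<^sup>2)"
    unfolding deg_quadratic_form
    by (intro sum_mono mult_right_mono) (simp_all add: degree_le_max_degree)
  thus ?thesis by (simp add: inner_vec_def sum_distrib_left power2_eq_square)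
qed

lemma deg_quadratic_form_eq_max_degree_imp:
  assumes "y \<bullet> (deg_matrix E *v y) = real (max_degree E) * (y \<bullet> y)"
  shows "deg_matrix E *v y = real (max_degree E) *\<^sub>R y"
proof -
  define \<Delta> where "\<Delta> = real (max_degree E)"
  have "(\<Sum>i\<in>UNIV. (\<Delta> - real (degree E i)) * (y $ i)\<^sup>2) = \<Delta> * (y \<bullet> y) - y \<bullet> (deg_matrix E *v y)"
    unfolding deg_quadratic_form
    by (simp add: left_diff_distrib sum_subtractf sum_distrib_left inner_vec_def power2_eq_square)
  also have "\<dots> = 0" using assms by (simp add: \<Delta>_def)
  finally have vanish: "(\<Delta> - real (degree E i)) * (y $ i)\<^sup>2 = 0" for i
    by (subst (asm) sum_nonneg_eq_0_iff) (auto simp: \<Delta>_def degree_le_max_degree)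
  have "real (degree E i) * y $ i = \<Delta> * y $ i" for i
    using vanish[of i] by auto
  thus ?thesis by (simp add: \<Delta>_def deg_matrix_mult vec_eq_iff)
qed

lemma quadratic_form_A_alpha:
  "y \<bullet> (A_alpha \<alpha> E *v y) = \<alpha> * (y \<bullet> (deg_matrix E *v y)) + (1 - \<alpha>) * (y \<bullet> (adj_matrix E *v y))"
  by (simp add: A_alpha_def matrix_vector_mult_add_rdistrib inner_add_right
      scaleR_matrix_vector_assoc[symmetric])

lemma quadratic_form_signless_laplacian:
  "y \<bullet> (signless_laplacian E *v y) = y \<bullet> (deg_matrix E *v y) + y \<bullet> (adj_matrix E *v y)"
  by (simp add: signless_laplacian_def matrix_vector_mult_add_rdistrib inner_add_right)

lemma adj_eigenvector_pos:
  assumes "simple_graph E" "connected_graph E"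
    and "y \<ge> 0" "y \<noteq> 0" "adj_matrix E *v y = \<mu> *\<^sub>R y"
  shows "y $ k > 0"
proof -
  have nonneg: "y $ j \<ge> 0" for j using assms(3) by (simp add: less_eq_vec_def)
  obtain i where "y $ i \<noteq> 0" using assms(4) by (metis vec_eq_iff zero_index)
  with nonneg have "y $ i > 0" by (simp add: order_less_le)
  have "E\<^sup>*\<^sup>* i k" using assms(2) by (simp add: connected_graph_def)
  thus ?thesis
  proof (induction rule: rtranclp_induct)
    case base show ?case by fact
  next
    case (step k k')
    have "E k' k" using step.hyps(2) assms(1) by (simp add: simple_graph_def)
    hence "y $ k \<le> (\<Sum>j\<in>UNIV. (if E k' j then 1 else 0) * y $ j)"
      using member_le_sum[of k UNIV "\<lambda>j. (if E k' j then 1 else 0) * y $ j"] nonneg by simp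
    also have "\<dots> = \<mu> * y $ k'"
      using arg_cong[OF assms(5), of "\<lambda>v. v $ k'"]
      by (simp add: adj_matrix_def matrix_vector_mult_def)
    finally have "y $ k' \<noteq> 0" using step.IH by auto
    with nonneg show ?case by (simp add: order_less_le)
  qed
qed

lemma common_eigenvector_imp_regular:
  assumes "simple_graph E" "connected_graph E"
    and "y \<ge> 0" "y \<noteq> 0" "adj_matrix E *v y = \<mu> *\<^sub>R y" "deg_matrix E *v y = c *\<^sub>R y"
  shows "\<not> irregular E"
proof -
  have "real (degree E k) = c" for k
  proof -
    have "real (degree E k) * y $ k = c * y $ k"
      using arg_cong[OF assms(6), of "\<lambda>v. v $ k"] by (simp add: deg_matrix_mult)
    thus ?thesis using adj_eigenvector_pos[OF assms(1-5), of k] by simp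
  qed
  hence "degree E i = degree E j" for i j by (metis of_nat_eq_iff)
  thus ?thesis by (simp add: irregular_def)
qed

lemma signless_laplacian_perron_vector:
  assumes "simple_graph E"
  obtains y where "y \<ge> 0" "y \<bullet> y = 1"
    "signless_laplacian E *v y = rho (signless_laplacian E) *\<^sub>R y"
  using nonneg_rho_eigenvector[OF transpose_signless_laplacian[OF assms] signless_laplacian_nonneg]
  by blast

lemma signless_laplacian_eigenvector_split:
  assumes "signless_laplacian E *v y = \<mu> *\<^sub>R y"
  shows "deg_matrix E *v y = c *\<^sub>R y \<longleftrightarrow> adj_matrix E *v y = (\<mu> - c) *\<^sub>R y"
proof -
  have "adj_matrix E *v y = \<mu> *\<^sub>R y - deg_matrix E *v y"
    using assms by (simp add: signless_laplacian_def matrix_vector_mult_add_rdistrib eq_diff_eq add.commute)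
  thus ?thesis by (auto simp: scaleR_diff_left)
qed

lemma rho_A_alpha_half:
  assumes "simple_graph E"
  shows "rho (A_alpha (1/2) E) = rho (signless_laplacian E) / 2"
proof -
  have "A_alpha (1/2) E = (1/2) *\<^sub>R signless_laplacian E"
    by (simp add: A_alpha_def signless_laplacian_def scaleR_add_right)
  thus ?thesis
    using rho_scaleR[OF transpose_signless_laplacian[OF assms], of "1/2"] by simp
qed

lemma rho_A_alpha_ge_max_degree_bound:
  fixes E :: "'n::finite \<Rightarrow> 'n \<Rightarrow> bool"
  assumes sg: "simple_graph E" and "\<alpha> \<le> 1/2"
  shows "(1 - \<alpha>) * rho (signless_laplacian E) + (2*\<alpha> - 1) * real (max_degree E)
           \<le> rho (A_alpha \<alpha> E)"
    and "\<alpha> < 1/2 \<Longrightarrow> connected_graph E \<Longrightarrow> irregular E \<Longrightarrow>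
         (1 - \<alpha>) * rho (signless_laplacian E) + (2*\<alpha> - 1) * real (max_degree E)
           < rho (A_alpha \<alpha> E)"
proof -
  define \<Delta> where "\<Delta> = real (max_degree E)"
  obtain y where y: "y \<ge> 0" "y \<bullet> y = 1"
    and Qy: "signless_laplacian E *v y = rho (signless_laplacian E) *\<^sub>R y"
    using signless_laplacian_perron_vector[OF sg] by blast
  define a where "a = y \<bullet> (deg_matrix E *v y)"
  have "y \<bullet> (adj_matrix E *v y) = rho (signless_laplacian E) - a"
    using quadratic_form_signless_laplacian[of y E] Qy y(2) by (simp add: a_def)
  hence "y \<bullet> (A_alpha \<alpha> E *v y) = \<alpha> * a + (1 - \<alpha>) * (rho (signless_laplacian E) - a)"
    by (simp add: quadratic_form_A_alpha flip: a_def)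
  also have "\<dots> = (1 - \<alpha>) * rho (signless_laplacian E) + (2*\<alpha> - 1) * a"
    by (simp add: algebra_simps)
  finally have "(1 - \<alpha>) * rho (signless_laplacian E) + (2*\<alpha> - 1) * a \<le> rho (A_alpha \<alpha> E)"
    using rho_rayleigh(1)[OF transpose_A_alpha[OF sg, of \<alpha>], of y] y(2) by simp
  moreover have "a \<le> \<Delta>"
    using deg_quadratic_form_le_max_degree[of y E] y(2) by (simp add: a_def \<Delta>_def)
  ultimately show "(1 - \<alpha>) * rho (signless_laplacian E) + (2*\<alpha> - 1) * \<Delta> \<le> rho (A_alpha \<alpha> E)"
    using mult_left_mono_neg[of a \<Delta> "2*\<alpha> - 1"] \<open>\<alpha> \<le> 1/2\<close> by linarith
  assume "\<alpha> < 1/2" "connected_graph E" "irregular E"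
  show "(1 - \<alpha>) * rho (signless_laplacian E) + (2*\<alpha> - 1) * \<Delta> < rho (A_alpha \<alpha> E)"
  proof (rule ccontr)
    assume "\<not> ?thesis"
    hence "(2*\<alpha> - 1) * a \<le> (2*\<alpha> - 1) * \<Delta>"
      using \<open>(1 - \<alpha>) * _ + (2*\<alpha> - 1) * a \<le> _\<close> by linarith
    hence "a = \<Delta>"
      using \<open>a \<le> \<Delta>\<close> \<open>\<alpha> < 1/2\<close> by (simp add: mult_le_cancel_left_neg)
    hence "deg_matrix E *v y = \<Delta> *\<^sub>R y"
      using deg_quadratic_form_eq_max_degree_imp[of y E] y(2) by (simp add: a_def \<Delta>_def)
    moreover from this have "adj_matrix E *v y = (rho (signless_laplacian E) - \<Delta>) *\<^sub>R y"
      using signless_laplacian_eigenvector_split[OF Qy] by blast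
    moreover have "y \<noteq> 0" using y(2) by auto
    ultimately show False
      using common_eigenvector_imp_regular[OF sg \<open>connected_graph E\<close> y(1)] \<open>irregular E\<close>
      by blast
  qed
qed

lemma rho_A_alpha_ge_adjacency_bound:
  fixes E :: "'n::finite \<Rightarrow> 'n \<Rightarrow> bool"
  assumes sg: "simple_graph E" and "1/2 \<le> \<alpha>"
  shows "\<alpha> * rho (signless_laplacian E) + (1 - 2*\<alpha>) * rho (adj_matrix E) \<le> rho (A_alpha \<alpha> E)"
    and "1/2 < \<alpha> \<Longrightarrow> connected_graph E \<Longrightarrow> irregular E \<Longrightarrow>
         \<alpha> * rho (signless_laplacian E) + (1 - 2*\<alpha>) * rho (adj_matrix E) < rho (A_alpha \<alpha> E)"
proof -
  obtain y where y: "y \<ge> 0" "y \<bullet> y = 1"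
    and Qy: "signless_laplacian E *v y = rho (signless_laplacian E) *\<^sub>R y"
    using signless_laplacian_perron_vector[OF sg] by blast
  define b where "b = y \<bullet> (adj_matrix E *v y)"
  have "y \<bullet> (deg_matrix E *v y) = rho (signless_laplacian E) - b"
    using quadratic_form_signless_laplacian[of y E] Qy y(2) by (simp add: b_def)
  hence "y \<bullet> (A_alpha \<alpha> E *v y) = \<alpha> * (rho (signless_laplacian E) - b) + (1 - \<alpha>) * b"
    by (simp add: quadratic_form_A_alpha flip: b_def)
  also have "\<dots> = \<alpha> * rho (signless_laplacian E) + (1 - 2*\<alpha>) * b"
    by (simp add: algebra_simps)
  finally have "\<alpha> * rho (signless_laplacian E) + (1 - 2*\<alpha>) * b \<le> rho (A_alpha \<alpha> E)"
    using rho_rayleigh(1)[OF transpose_A_alpha[OF sg, of \<alpha>], of y] y(2) by simp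
  moreover have "b \<le> rho (adj_matrix E)"
    using rho_rayleigh(1)[OF transpose_adj_matrix[OF sg], of y] y(2) by (simp add: b_def)
  ultimately show "\<alpha> * rho (signless_laplacian E) + (1 - 2*\<alpha>) * rho (adj_matrix E) \<le> rho (A_alpha \<alpha> E)"
    using mult_left_mono_neg[of b "rho (adj_matrix E)" "1 - 2*\<alpha>"] \<open>1/2 \<le> \<alpha>\<close> by linarith
  assume "1/2 < \<alpha>" "connected_graph E" "irregular E"
  show "\<alpha> * rho (signless_laplacian E) + (1 - 2*\<alpha>) * rho (adj_matrix E) < rho (A_alpha \<alpha> E)"
  proof (rule ccontr)
    assume "\<not> ?thesis"
    hence "(1 - 2*\<alpha>) * b \<le> (1 - 2*\<alpha>) * rho (adj_matrix E)"
      using \<open>\<alpha> * _ + (1 - 2*\<alpha>) * b \<le> _\<close> by linarith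
    hence "b = rho (adj_matrix E)"
      using \<open>b \<le> _\<close> \<open>1/2 < \<alpha>\<close> by (simp add: mult_le_cancel_left_neg)
    hence "adj_matrix E *v y = rho (adj_matrix E) *\<^sub>R y"
      using rayleigh_maximizer_eigenvector[OF transpose_adj_matrix[OF sg]] y(2) by (simp add: b_def)
    moreover from this
    have "deg_matrix E *v y = (rho (signless_laplacian E) - rho (adj_matrix E)) *\<^sub>R y"
      using signless_laplacian_eigenvector_split[OF Qy] by simp
    moreover have "y \<noteq> 0" using y(2) by auto
    ultimately show False
      using common_eigenvector_imp_regular[OF sg \<open>connected_graph E\<close> y(1)] \<open>irregular E\<close>
      by blast
  qed
qed

theorem proposition11:
  fixes E :: "'n::finite \<Rightarrow> 'n \<Rightarrow> bool" and \<alpha> :: real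
  assumes "simple_graph E"
  shows "(0 \<le> \<alpha> \<and> \<alpha> \<le> 1/2 \<longrightarrow>
            rho (A_alpha \<alpha> E) \<ge> (1 - \<alpha>) * rho (signless_laplacian E) + (2*\<alpha> - 1) * real (max_degree E)
          \<and> (connected_graph E \<and> irregular E \<longrightarrow>
               (rho (A_alpha \<alpha> E) = (1 - \<alpha>) * rho (signless_laplacian E) + (2*\<alpha> - 1) * real (max_degree E)
                \<longleftrightarrow> \<alpha> = 1/2)))
       \<and> (1/2 \<le> \<alpha> \<and> \<alpha> \<le> 1 \<longrightarrow>
            rho (A_alpha \<alpha> E) \<ge> \<alpha> * rho (signless_laplacian E) + (1 - 2*\<alpha>) * rho (adj_matrix E)
          \<and> (connected_graph E \<and> irregular E \<longrightarrow>
               (rho (A_alpha \<alpha> E) = \<alpha> * rho (signless_laplacian E) + (1 - 2*\<alpha>) * rho (adj_matrix E)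
                \<longleftrightarrow> \<alpha> = 1/2)))"
proof (cases "\<alpha> = 1/2")
  case True
  show ?thesis unfolding True using rho_A_alpha_half[OF assms] by simp
next
  case False
  have "rho (A_alpha \<alpha> E) \<noteq> (1 - \<alpha>) * rho (signless_laplacian E) + (2*\<alpha> - 1) * real (max_degree E)"
    if "\<alpha> \<le> 1/2" "connected_graph E" "irregular E"
    using rho_A_alpha_ge_max_degree_bound(2)[OF assms that(1) _ that(2,3)] that(1) False by simp
  moreover have "rho (A_alpha \<alpha> E) \<noteq> \<alpha> * rho (signless_laplacian E) + (1 - 2*\<alpha>) * rho (adj_matrix E)"
    if "1/2 \<le> \<alpha>" "connected_graph E" "irregular E"
    using rho_A_alpha_ge_adjacency_bound(2)[OF assms that(1) _ that(2,3)] that(1) False by simp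
  ultimately show ?thesis
    using rho_A_alpha_ge_max_degree_bound(1)[OF assms] rho_A_alpha_ge_adjacency_bound(1)[OF assms]
      False by auto
qed

end
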